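(* For every $d\in\mathbb{Z}^+$ there exists a deterministic 1-aware population protocol computing the predicate $R\colon\mathbb{Z}^+\to\{0,1\}$, $R(n)=\mathbb{I}\{n\ge d\}$ (i.e. $R(n)=1$ if $n\ge d$ and $R(n)=0$ otherwise), whose number of states is at most $\log_2 d + \min\{e,z\} + O(1)$, where $e$ is the number of $1$'s in the binary representation of $d$, $z$ is the number of $0$'s in the binary representation of $d-1$, and the $O(1)$ term is an absolute constant independent of $d$.
   Context: A population protocol is a tuple $\Pi=\langle Q,Q_0,Q_1,q_{init},\delta\rangle$ where $Q$ is a finite set of states, $Q=Q_0\sqcup Q_1$ (disjoint union), $q_{init}\in Q$ is the initial state, and $\delta\colon Q^2\to 2^{Q^2}\setminus\{\varnothing\}$ is the transition function. $\Pi$ is deterministic if $|\delta(q_1,q_2)|=1$ for all $q_1,q_2\in Q$. For $n\in\mathbb{Z}^+$, an $n$-size configuration is a function $C\colon[n]\to Q$, where $[n]=\{1,\dots,n\}$; the initial configuration $I_n$ maps every element to $q_{init}$. A pair $(C_1,C_2)$ of $n$-size configurations is a transition if there are distinct $i,j\in[n]$ with $(C_2(i),C_2(j))\in\delta(C_1(i),C_1(j))$ and $C_2(k)=C_1(k)$ for all $k\ne i,j$ (the pair $(i,j)$ is ordered). $D$ is reachable from $C$ if there is a finite sequence $C=C_1,\dots,C_k=D$ ($k\ge1$) of configurations with each $(C_i,C_{i+1})$ a transition. An execution is an infinite sequence $(C_i)_{i\ge1}$ with $C_1=I_n$ for some $n$ and each $(C_i,C_{i+1})$ a transition; it is fair if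 whenever a configuration $C$ occurs infinitely often in it and $D$ is reachable from $C$, then $D$ also occurs infinitely often. $\Pi$ is a 1-aware population protocol computing $R\colon\mathbb{Z}^+\to\{0,1\}$ if for every $n\in\mathbb{Z}^+$: if $R(n)=0$ then every configuration $C$ reachable from $I_n$ satisfies $C([n])\subseteq Q_0$; and if $R(n)=1$ then for every fair execution $(C_i)_{i\ge1}$ with $C_1=I_n$ there is $i_0$ such that $C_i([n])\subseteq Q_1$ for all $i\ge i_0$. The number of states of $\Pi$ is $|Q|$. *)

theory Defs
  imports Complex_Main
begin

text \<open>States are encoded as natural numbers (any finite state set can be so encoded).
A configuration of size n is represented by a total function nat => nat, of which
only the values on {1..n} are meaningful; transitions leave all other positions unchanged.\<close>

type_synonym state = nat
type_synonym config = "nat \<Rightarrow> state"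
type_synonym trans_fun = "state \<Rightarrow> state \<Rightarrow> (state \<times> state) set"

definition population_protocol ::
  "state set \<Rightarrow> state set \<Rightarrow> state set \<Rightarrow> state \<Rightarrow> trans_fun \<Rightarrow> bool" where
  "population_protocol Q Q0 Q1 qinit \<delta> \<longleftrightarrow>
     finite Q \<and> Q = Q0 \<union> Q1 \<and> Q0 \<inter> Q1 = {} \<and> qinit \<in> Q \<and>
     (\<forall>q1\<in>Q. \<forall>q2\<in>Q. \<delta> q1 q2 \<subseteq> Q \<times> Q \<and> \<delta> q1 q2 \<noteq> {})"

definition deterministic :: "state set \<Rightarrow> trans_fun \<Rightarrow> bool" where
  "deterministic Q \<delta> \<longleftrightarrow> (\<forall>q1\<in>Q. \<forall>q2\<in>Q. card (\<delta> q1 q2) = 1)"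

definition init_config :: "state \<Rightarrow> config" where
  "init_config qinit = (\<lambda>_. qinit)"

definition transition :: "trans_fun \<Rightarrow> nat \<Rightarrow> config \<Rightarrow> config \<Rightarrow> bool" where
  "transition \<delta> n C1 C2 \<longleftrightarrow>
     (\<exists>i\<in>{1..n}. \<exists>j\<in>{1..n}. i \<noteq> j \<and> (C2 i, C2 j) \<in> \<delta> (C1 i) (C1 j) \<and>
        (\<forall>k. k \<noteq> i \<and> k \<noteq> j \<longrightarrow> C2 k = C1 k))"

definition reachable :: "trans_fun \<Rightarrow> nat \<Rightarrow> config \<Rightarrow> config \<Rightarrow> bool" where
  "reachable \<delta> n = (transition \<delta> n)\<^sup>*\<^sup>*"

definition execution :: "state \<Rightarrow> trans_fun \<Rightarrow> nat \<Rightarrow> (nat \<Rightarrow> config) \<Rightarrow> bool" where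
  "execution qinit \<delta> n E \<longleftrightarrow> E 0 = init_config qinit \<and> (\<forall>i. transition \<delta> n (E i) (E (Suc i)))"

definition fair :: "trans_fun \<Rightarrow> nat \<Rightarrow> (nat \<Rightarrow> config) \<Rightarrow> bool" where
  "fair \<delta> n E \<longleftrightarrow>
     (\<forall>C D. (\<exists>\<^sub>\<infinity>i. E i = C) \<and> reachable \<delta> n C D \<longrightarrow> (\<exists>\<^sub>\<infinity>i. E i = D))"

definition computes_1aware ::
  "state set \<Rightarrow> state set \<Rightarrow> state set \<Rightarrow> state \<Rightarrow> trans_fun \<Rightarrow> (nat \<Rightarrow> bool) \<Rightarrow> bool" where
  "computes_1aware Q Q0 Q1 qinit \<delta> R \<longleftrightarrow>
     (\<forall>n\<ge>1.
        (\<not> R n \<longrightarrow> (\<forall>C. reachable \<delta> n (init_config qinit) C \<longrightarrow> C ` {1..n} \<subseteq> Q0)) \<and>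
        (R n \<longrightarrow> (\<forall>E. execution qinit \<delta> n E \<and> fair \<delta> n E \<longrightarrow>
                    (\<exists>i0. \<forall>i\<ge>i0. E i ` {1..n} \<subseteq> Q1))))"

text \<open>Binary representation (most significant bit first); 0 is written as "0".\<close>
fun binary_digits :: "nat \<Rightarrow> nat list" where
  "binary_digits n = (if n < 2 then [n] else binary_digits (n div 2) @ [n mod 2])"

definition count_ones :: "nat \<Rightarrow> nat" where
  "count_ones n = length (filter (\<lambda>b. b = 1) (binary_digits n))"

definition count_zeros :: "nat \<Rightarrow> nat" where
  "count_zeros n = length (filter (\<lambda>b. b = 0) (binary_digits n))"

end

theory Submission
  imports Defs
begin

text \<open>Agents carry natural numbers, all starting at 1, so below the threshold the values add up to
  the population size \<open>n\<close>. Two agents whose values add up to at least \<open>d\<close> both switch to the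
  accepting value \<open>d\<close>, which then spreads. Any other interaction preserves the sum of the two
  values and is undone by repeating it, so a configuration reached without acceptance can always
  return to the initial one. Hence nothing is accepted when \<open>n < d\<close>. When \<open>n \<ge> d\<close>, write
  \<open>d = 2 ^ p + r\<close> with \<open>r < 2 ^ p\<close>: powers of two can be split, merged and moved around freely,
  and an agent holding the prefix \<open>r mod 2 ^ b\<close> of \<open>r\<close> may trade a token \<open>2 ^ a\<close> for \<open>2 ^ b\<close>
  whenever \<open>[b, a)\<close> is a maximal run of ones of \<open>r\<close>. Run by run one agent assembles \<open>r\<close> while
  another one holds \<open>2 ^ p\<close>; their meeting is accepting, and fairness drives every execution
  into the all-accepting configuration. Apart from \<open>d\<close>, the states are \<open>0\<close>, the at most
  \<open>p + 1\<close> powers of two below \<open>d\<close>, and one prefix of \<open>r\<close> per run of ones. The number of runs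
  is at most the number of ones of \<open>d\<close>, and at most one more than the number of zeros of
  \<open>d - 1\<close>.\<close>

section \<open>Binary digits\<close>

declare binary_digits.simps [simp del]

lemma binary_digits_less_two: "n < 2 \<Longrightarrow> binary_digits n = [n]"
  by (simp add: binary_digits.simps)

lemma binary_digits_step: "2 \<le> n \<Longrightarrow> binary_digits n = binary_digits (n div 2) @ [n mod 2]"
  by (simp add: binary_digits.simps)

lemma bit_imp_pow_le: "bit (n::nat) i \<Longrightarrow> 2 ^ i \<le> n"
  by (metis bit_iff_odd div_less even_zero not_le)

lemma finite_pow_le: "finite {i. 2 ^ i \<le> (n::nat)}"
  by (rule finite_subset[of _ "{..<n}"]) (auto intro: less_le_trans[OF less_exp])

lemma finite_bits: "finite {i. bit (n::nat) i}"
  using finite_pow_le by (rule rev_finite_subset) (auto intro: bit_imp_pow_le)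

lemma card_zero_Un_Suc_image:
  "finite B \<Longrightarrow> card ({i. i = 0 \<and> P} \<union> Suc ` B) = of_bool P + card B"
  by (cases P) (simp_all add: card_image)

lemma bits_div2: "{i. bit (n::nat) i} = {i. i = 0 \<and> odd n} \<union> Suc ` {i. bit (n div 2) i}"
proof (rule set_eqI)
  fix i show "i \<in> {i. bit n i} \<longleftrightarrow> i \<in> {i. i = 0 \<and> odd n} \<union> Suc ` {i. bit (n div 2) i}"
    by (cases i) (auto simp: bit_0 bit_Suc)
qed

lemma zeros_div2:
  assumes "0 < (n::nat)"
  shows "{i. 2 ^ i \<le> n \<and> \<not> bit n i} =
    {i. i = 0 \<and> even n} \<union> Suc ` {i. 2 ^ i \<le> n div 2 \<and> \<not> bit (n div 2) i}"
proof (rule set_eqI)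
  have "2 ^ Suc k \<le> n \<longleftrightarrow> 2 ^ k \<le> n div 2" for k
    by (simp add: less_eq_div_iff_mult_less_eq mult.commute)
  then show "i \<in> {i. 2 ^ i \<le> n \<and> \<not> bit n i} \<longleftrightarrow>
      i \<in> {i. i = 0 \<and> even n} \<union> Suc ` {i. 2 ^ i \<le> n div 2 \<and> \<not> bit (n div 2) i}" for i
    using assms by (cases i) (auto simp: bit_0 bit_Suc)
qed

lemma count_ones_eq_card_bits: "count_ones n = card {i. bit n i}"
proof (induction n rule: less_induct)
  case (less n)
  show ?case
  proof (cases "n < 2")
    case True
    then have "n = 0 \<or> n = 1" by auto
    then show ?thesis by (auto simp: count_ones_def binary_digits_less_two bit_Suc_0_iff)
  next
    case False
    then have "count_ones n = count_ones (n div 2) + of_bool (odd n)"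
      by (simp add: count_ones_def binary_digits_step odd_iff_mod_2_eq_one)
    also have "\<dots> = card {i. bit n i}"
      using less.IH[of "n div 2"] False
      by (simp add: bits_div2[of n] card_zero_Un_Suc_image finite_bits)
    finally show ?thesis .
  qed
qed

lemma count_zeros_eq_card: "0 < n \<Longrightarrow> count_zeros n = card {i. 2 ^ i \<le> n \<and> \<not> bit n i}"
proof (induction n rule: less_induct)
  case (less n)
  show ?case
  proof (cases "n < 2")
    case True
    with less.prems have n1: "n = 1" by simp
    then have "{i. 2 ^ i \<le> n \<and> \<not> bit n i} = {}"
      by (auto simp: bit_Suc_0_iff le_Suc_eq)
    moreover have "count_zeros n = 0"
      using n1 by (simp add: count_zeros_def binary_digits_less_two)
    ultimately show ?thesis by (metis card.empty)
  next
    case False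
    then have "count_zeros n = count_zeros (n div 2) + of_bool (even n)"
      by (simp add: count_zeros_def binary_digits_step even_iff_mod_2_eq_zero)
    also have "\<dots> = card {i. 2 ^ i \<le> n \<and> \<not> bit n i}"
      using less.IH[of "n div 2"] False finite_subset[OF _ finite_pow_le[of "n div 2"]]
      by (simp add: zeros_div2[of n] card_zero_Un_Suc_image)
    finally show ?thesis .
  qed
qed

lemma div_diff_one_eq: "n mod k \<noteq> 0 \<Longrightarrow> (n - 1) div k = n div (k::nat)"
proof (cases "k = 0")
  case False
  assume "n mod k \<noteq> 0"
  then have "n - 1 = (n mod k - 1) + n div k * k"
    using div_mult_mod_eq[of n k] by linarith
  moreover have "n mod k - 1 < k" using False by (simp add: less_imp_diff_less)
  ultimately show ?thesis by simp
qed simp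

lemma bit_diff_one:
  assumes "bit (n::nat) i" "i < a"
  shows "bit (n - 1) a = bit n a"
proof -
  have "n mod 2 ^ a \<noteq> 0"
  proof
    assume "n mod 2 ^ a = 0"
    moreover have "(2::nat) ^ a = 2 ^ i * 2 ^ (a - i)"
      using assms(2) by (simp flip: power_add)
    ultimately obtain q where "n = 2 ^ i * (2 ^ (a - i) * q)"
      by (metis dvd_def mod_0_imp_dvd mult.assoc)
    then have "n div 2 ^ i = 2 ^ (a - i) * q" by simp
    with assms show False by (simp add: bit_iff_odd)
  qed
  then have "(n - 1) div 2 ^ a = n div 2 ^ a" by (rule div_diff_one_eq)
  then show ?thesis by (simp only: bit_iff_odd)
qed

lemma mod_pow2_add_run:
  fixes x :: nat
  assumes "b \<le> a" "\<forall>j. b \<le> j \<and> j < a \<longrightarrow> bit x j"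
  shows "x mod 2 ^ a + 2 ^ b = x mod 2 ^ b + 2 ^ a"
  using assms
proof (induction a)
  case (Suc a)
  show ?case
  proof (cases "b = Suc a")
    case False
    with Suc.prems have "b \<le> a" "bit x a" by auto
    with Suc show ?thesis
      using take_bit_Suc_from_most[of a x] by (simp add: take_bit_eq_mod)
  qed simp
qed simp

section \<open>Population protocols\<close>

lemma transitionI:
  "i \<in> {1..n} \<Longrightarrow> j \<in> {1..n} \<Longrightarrow> i \<noteq> j \<Longrightarrow> (a, b) \<in> \<delta> (C i) (C j) \<Longrightarrow>
    transition \<delta> n C (C(i := a, j := b))"
  unfolding transition_def by (rule bexI[of _ i], rule bexI[of _ j]) auto

lemma transitionE:
  assumes "transition \<delta> n C D"
  obtains i j where "i \<in> {1..n}" "j \<in> {1..n}" "i \<noteq> j" "(D i, D j) \<in> \<delta> (C i) (C j)"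
    "\<And>k. k \<noteq> i \<Longrightarrow> k \<noteq> j \<Longrightarrow> D k = C k"
  using assms unfolding transition_def by blast

lemma reachable_refl: "reachable \<delta> n C C"
  by (simp add: reachable_def)

lemma reachable_step: "reachable \<delta> n C D \<Longrightarrow> transition \<delta> n D E \<Longrightarrow> reachable \<delta> n C E"
  unfolding reachable_def by (rule rtranclp.rtrancl_into_rtrancl)

lemma reachable_step_converse: "transition \<delta> n C D \<Longrightarrow> reachable \<delta> n D E \<Longrightarrow> reachable \<delta> n C E"
  unfolding reachable_def by (rule converse_rtranclp_into_rtranclp)

lemma reachable_trans: "reachable \<delta> n C D \<Longrightarrow> reachable \<delta> n D E \<Longrightarrow> reachable \<delta> n C E"
  unfolding reachable_def by (rule rtranclp_trans)

lemma reachable_from_init_in_states: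
  assumes "population_protocol Q Q0 Q1 q \<delta>" "reachable \<delta> n (init_config q) C"
  shows "(\<forall>k\<in>{1..n}. C k \<in> Q) \<and> (\<forall>k. k \<notin> {1..n} \<longrightarrow> C k = q)"
  using assms(2) unfolding reachable_def
proof (induction rule: rtranclp_induct)
  case base
  have "q \<in> Q" using assms(1) unfolding population_protocol_def by blast
  then show ?case by (simp add: init_config_def)
next
  case (step C D)
  from step.hyps(2) obtain i j where ij: "i \<in> {1..n}" "j \<in> {1..n}" "i \<noteq> j"
    "(D i, D j) \<in> \<delta> (C i) (C j)" "\<And>k. k \<noteq> i \<Longrightarrow> k \<noteq> j \<Longrightarrow> D k = C k"
    by (elim transitionE) blast
  with step.IH assms(1) have "D i \<in> Q" "D j \<in> Q"
    unfolding population_protocol_def by blast+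
  then have "D k \<in> Q" if "k \<in> {1..n}" for k
    using that step.IH ij(5) by (cases "k = i \<or> k = j") auto
  moreover have "D k = q" if "k \<notin> {1..n}" for k
    using that step.IH ij by fastforce
  ultimately show ?case by blast
qed

lemma finite_reachable_from_init:
  assumes "population_protocol Q Q0 Q1 q \<delta>"
  shows "finite {C. reachable \<delta> n (init_config q) C}"
proof (rule finite_subset)
  show "{C. reachable \<delta> n (init_config q) C} \<subseteq>
      {C. \<forall>k. (k \<in> {1..n} \<longrightarrow> C k \<in> Q) \<and> (k \<notin> {1..n} \<longrightarrow> C k = q)}"
    using reachable_from_init_in_states[OF assms] by blast
  show "finite {C. \<forall>k. (k \<in> {1..n} \<longrightarrow> C k \<in> Q) \<and> (k \<notin> {1..n} \<longrightarrow> C k = q)}"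
    using assms unfolding population_protocol_def by (intro finite_set_of_finite_funs) blast+
qed

text \<open>A finite reachable set forces some configuration to recur, and fairness then carries the
  execution into the absorbing configuration.\<close>
lemma fair_execution_absorbed:
  assumes exec: "execution q \<delta> n E" and fair: "fair \<delta> n E"
    and fin: "finite {C. reachable \<delta> n (init_config q) C}"
    and reach: "\<And>C. reachable \<delta> n (init_config q) C \<Longrightarrow> reachable \<delta> n C F"
    and absorbing: "\<And>D. transition \<delta> n F D \<Longrightarrow> D = F"
  shows "\<exists>i0. \<forall>i\<ge>i0. E i = F"
proof -
  have moves: "transition \<delta> n (E i) (E (Suc i))" for i
    using exec by (simp add: execution_def)
  have reach_E: "reachable \<delta> n (init_config q) (E i)" for i
  proof (induction i)
    case 0
    show ?case using exec by (simp add: execution_def reachable_refl)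
  next
    case (Suc i)
    then show ?case using moves[of i] by (rule reachable_step)
  qed
  then have "range E \<subseteq> {C. reachable \<delta> n (init_config q) C}" by blast
  then have "finite (range E)" using fin by (rule finite_subset)
  then obtain C where "infinite (E -` {C})"
    by (rule inf_img_fin_domE) simp
  then have "\<exists>\<^sub>\<infinity>i. E i = C" by (simp add: frequently_cofinite vimage_def)
  moreover have "reachable \<delta> n C F"
  proof -
    obtain i where "E i = C" using frequently_ex[OF \<open>\<exists>\<^sub>\<infinity>i. E i = C\<close>] ..
    then show ?thesis using reach reach_E by blast
  qed
  ultimately have "\<exists>\<^sub>\<infinity>i. E i = F" using fair unfolding fair_def by blast
  then obtain i0 where "E i0 = F" using frequently_ex by blast
  have "E i = F" if "i0 \<le> i" for i
    using that
  proof (induction rule: dec_induct)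
    case (step m)
    then show ?case using absorbing moves[of m] by simp
  qed (rule \<open>E i0 = F\<close>)
  then show ?thesis by (intro exI[of _ i0]) simp
qed

lemma computes_1awareI:
  assumes protocol: "population_protocol Q Q0 Q1 q \<delta>"
    and reject: "\<And>n C. 1 \<le> n \<Longrightarrow> \<not> R n \<Longrightarrow> reachable \<delta> n (init_config q) C \<Longrightarrow> C ` {1..n} \<subseteq> Q0"
    and accept: "\<And>n. 1 \<le> n \<Longrightarrow> R n \<Longrightarrow> \<exists>F. F ` {1..n} \<subseteq> Q1 \<and>
      (\<forall>C. reachable \<delta> n (init_config q) C \<longrightarrow> reachable \<delta> n C F) \<and>
      (\<forall>D. transition \<delta> n F D \<longrightarrow> D = F)"
  shows "computes_1aware Q Q0 Q1 q \<delta> R"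
  unfolding computes_1aware_def
proof (intro allI impI conjI)
  fix n C assume "1 \<le> n" "\<not> R n" "reachable \<delta> n (init_config q) C"
  then show "C ` {1..n} \<subseteq> Q0" by (rule reject)
next
  fix n E assume n: "1 \<le> n" "R n" and run: "execution q \<delta> n E \<and> fair \<delta> n E"
  obtain F where F: "F ` {1..n} \<subseteq> Q1"
    "\<And>C. reachable \<delta> n (init_config q) C \<Longrightarrow> reachable \<delta> n C F"
    "\<And>D. transition \<delta> n F D \<Longrightarrow> D = F"
    using accept[OF n] by blast
  from run obtain i0 where "\<forall>i\<ge>i0. E i = F"
    using fair_execution_absorbed[OF _ _ finite_reachable_from_init[OF protocol] F(2,3)] by blast
  with F(1) show "\<exists>i0. \<forall>i\<ge>i0. E i ` {1..n} \<subseteq> Q1" by auto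
qed

section \<open>The threshold protocol\<close>

definition power_of_two :: "nat \<Rightarrow> bool" where
  "power_of_two x \<longleftrightarrow> (\<exists>k. x = 2 ^ k)"

lemma power_of_two_pow [simp]: "power_of_two (2 ^ k)"
  unfolding power_of_two_def by blast

lemma power_of_two_pos: "power_of_two x \<Longrightarrow> 0 < x"
  unfolding power_of_two_def by auto

lemma power_of_two_double: "power_of_two x \<Longrightarrow> power_of_two (2 * x)"
  unfolding power_of_two_def by (auto intro: exI[of _ "Suc _"])

lemma power_of_two_half:
  assumes "power_of_two x" "2 \<le> x"
  shows "power_of_two (x div 2)" "2 * (x div 2) = x"
proof -
  from assms(1) obtain k where k: "x = 2 ^ k" unfolding power_of_two_def by blast
  with assms(2) obtain k' where "k = Suc k'" by (cases k) auto
  with k have "x = 2 ^ Suc k'" by simp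
  then show "power_of_two (x div 2)" "2 * (x div 2) = x" by simp_all
qed

lemma sum_split_pair:
  assumes "finite S" "i \<in> S" "j \<in> S" "i \<noteq> j"
  shows "sum f S = f i + f j + sum f (S - {i, j})"
proof -
  have "sum f S = f i + sum f (S - {i})" using assms(1,2) by (rule sum.remove)
  also have "sum f (S - {i}) = f j + sum f (S - {i} - {j})"
    using assms by (intro sum.remove) auto
  also have "S - {i} - {j} = S - {i, j}" by auto
  finally show ?thesis by (simp add: add.assoc)
qed

lemma sum_change_pair:
  fixes C D :: "'a \<Rightarrow> 'b::comm_monoid_add"
  assumes "finite S" "i \<in> S" "j \<in> S" "i \<noteq> j" "\<And>k. k \<noteq> i \<Longrightarrow> k \<noteq> j \<Longrightarrow> D k = C k"
    and "D i + D j = C i + C j"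
  shows "sum D S = sum C S"
proof -
  have "sum D (S - {i, j}) = sum C (S - {i, j})" using assms(5) by (intro sum.cong) auto
  with assms show ?thesis by (simp add: sum_split_pair[of S i j])
qed

lemma card_less_sum:
  fixes f :: "'a \<Rightarrow> nat"
  assumes "finite S" "\<forall>k\<in>S. f k \<noteq> 0" "i \<in> S" "2 \<le> f i"
  shows "card S < sum f S"
proof -
  have "card S = 1 + card (S - {i})" using card_Suc_Diff1[OF assms(1,3)] by simp
  also have "card (S - {i}) \<le> sum f (S - {i})"
    using assms(2) sum_mono[of "S - {i}" "\<lambda>_. 1::nat" f] by (simp add: Suc_le_eq)
  also have "1 + sum f (S - {i}) < f i + sum f (S - {i})" using assms(4) by simp
  also have "\<dots> = sum f S" using assms(1,3) by (simp add: sum.remove)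
  finally show ?thesis by simp
qed

definition ones_then_zeros :: "nat \<Rightarrow> nat \<Rightarrow> nat \<Rightarrow> config \<Rightarrow> config" where
  "ones_then_zeros s n c C = (\<lambda>i. if i \<in> {s..n} then of_bool (i < s + c) else C i)"

lemma sum_ones_then_zeros:
  assumes "c \<le> card {s..n}"
  shows "sum (ones_then_zeros s n c C) {s..n} = c"
proof -
  have "sum (ones_then_zeros s n c C) {s..n} = card ({s..n} \<inter> {i. i < s + c})"
    unfolding ones_then_zeros_def by (simp add: sum.If_cases)
  also have "{s..n} \<inter> {i. i < s + c} = {s..<s + c}" using assms by auto
  finally show ?thesis by simp
qed

text \<open>A maximal run of ones of
  \<open>r\<close> occupying the bit positions \<open>[run_start a, a)\<close> is indexed by its end \<open>a\<close>.\<close>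
locale threshold_construction =
  fixes d p :: nat
  assumes two_le_d: "2 \<le> d" and pow_le_d: "2 ^ p \<le> d" and d_less_pow: "d < 2 ^ Suc p"
begin

definition r :: nat where "r = d - 2 ^ p"

lemma d_eq: "d = 2 ^ p + r"
  using pow_le_d by (simp add: r_def)

lemma r_less: "r < 2 ^ p"
  using d_less_pow d_eq by simp

lemma bit_r_iff: "i < p \<Longrightarrow> bit r i \<longleftrightarrow> bit d i"
proof -
  assume "i < p"
  then have "d = r + 2 ^ (p - i) * 2 ^ i"
    using d_eq by (simp flip: power_add)
  then have "d div 2 ^ i = 2 ^ (p - i) + r div 2 ^ i"
    using div_mult_self1[of "2 ^ i" r "2 ^ (p - i)"] by simp
  moreover have "even ((2::nat) ^ (p - i))" using \<open>i < p\<close> by simp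
  ultimately show ?thesis by (simp add: bit_iff_odd)
qed

lemma not_bit_r: "p \<le> i \<Longrightarrow> \<not> bit r i"
  using r_less bit_imp_pow_le[of r i] power_increasing[of p i "2::nat"] by linarith

definition run_ends :: "nat set" where
  "run_ends = {a. 0 < a \<and> bit r (a - 1) \<and> \<not> bit r a}"

definition run_start :: "nat \<Rightarrow> nat" where
  "run_start a = (LEAST b. \<forall>j. b \<le> j \<and> j < a \<longrightarrow> bit r j)"

definition at_run_boundary :: "nat \<Rightarrow> bool" where
  "at_run_boundary j \<longleftrightarrow> j = 0 \<or> \<not> bit r (j - 1) \<or> \<not> bit r j"

lemma run_end_le: "a \<in> run_ends \<Longrightarrow> 0 < a \<and> a \<le> p"
proof -
  assume "a \<in> run_ends"
  then have "0 < a" "bit r (a - 1)" unfolding run_ends_def by auto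
  then have "\<not> p \<le> a - 1" using not_bit_r by blast
  with \<open>0 < a\<close> show ?thesis by linarith
qed

lemma finite_run_ends: "finite run_ends"
proof (rule finite_subset)
  show "run_ends \<subseteq> {..p}" using run_end_le by auto
qed simp

lemma run_end_pow_less: "a \<in> run_ends \<Longrightarrow> 2 ^ a < d"
proof -
  assume a: "a \<in> run_ends"
  show ?thesis
  proof (cases "a < p")
    case True
    then have "(2::nat) ^ a < 2 ^ p" by simp
    then show ?thesis using pow_le_d by linarith
  next
    case False
    with run_end_le[OF a] have "a = p" by simp
    from a have "2 ^ (a - 1) \<le> r"
      unfolding run_ends_def by (blast intro: bit_imp_pow_le)
    moreover have "(0::nat) < 2 ^ (a - 1)" by simp
    ultimately have "0 < r" by linarith
    with \<open>a = p\<close> show ?thesis using d_eq by simp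
  qed
qed

lemma
  assumes "a \<in> run_ends"
  shows run_start_less: "run_start a < a"
    and bit_run: "run_start a \<le> j \<Longrightarrow> j < a \<Longrightarrow> bit r j"
    and at_run_boundary_run_start: "at_run_boundary (run_start a)"
proof -
  let ?ones = "\<lambda>b. \<forall>j. b \<le> j \<and> j < a \<longrightarrow> bit r j"
  have "0 < a" "bit r (a - 1)" using assms unfolding run_ends_def by auto
  have ones_last: "?ones (a - 1)"
  proof (intro allI impI)
    fix j assume "a - 1 \<le> j \<and> j < a"
    then have "j = a - 1" by linarith
    with \<open>bit r (a - 1)\<close> show "bit r j" by simp
  qed
  show "run_start a < a"
    using Least_le[of ?ones, OF ones_last] \<open>0 < a\<close> unfolding run_start_def by linarith
  have ones: "?ones (run_start a)"
    using ones_last unfolding run_start_def by (rule LeastI)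
  then show "run_start a \<le> j \<Longrightarrow> j < a \<Longrightarrow> bit r j" by blast
  show "at_run_boundary (run_start a)"
  proof (rule ccontr)
    assume "\<not> at_run_boundary (run_start a)"
    then have "0 < run_start a" "bit r (run_start a - 1)" unfolding at_run_boundary_def by auto
    have "?ones (run_start a - 1)"
    proof (intro allI impI)
      fix j assume "run_start a - 1 \<le> j \<and> j < a"
      then consider "j = run_start a - 1" | "run_start a \<le> j \<and> j < a" by linarith
      then show "bit r j" using ones \<open>bit r (run_start a - 1)\<close> by cases blast+
    qed
    then have "run_start a \<le> run_start a - 1" unfolding run_start_def by (rule Least_le)
    with \<open>0 < run_start a\<close> show False by linarith
  qed
qed

lemma inj_on_run_start: "inj_on run_start run_ends"
proof -
  have le_imp_eq: "a = b"
    if "a \<in> run_ends" "b \<in> run_ends" "run_start a = run_start b" "a \<le> b" for a b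
  proof (rule ccontr)
    assume "a \<noteq> b"
    with that have "bit r a" using run_start_less[of a] bit_run[of b a] by simp
    with that(1) show False unfolding run_ends_def by simp
  qed
  show ?thesis
  proof (rule inj_onI)
    fix a b assume "a \<in> run_ends" "b \<in> run_ends" "run_start a = run_start b"
    then show "a = b" using le_imp_eq[of a b] le_imp_eq[of b a] by linarith
  qed
qed

lemma mod_run_end: "a \<in> run_ends \<Longrightarrow> r mod 2 ^ a + 2 ^ run_start a = r mod 2 ^ run_start a + 2 ^ a"
  by (rule mod_pow2_add_run) (auto simp: bit_run less_imp_le run_start_less)

definition token :: "nat \<Rightarrow> bool" where
  "token x \<longleftrightarrow> x = 0 \<or> power_of_two x \<and> x < d"

definition states :: "nat set" where
  "states = insert d (Collect token \<union> (\<lambda>a. r mod 2 ^ a) ` run_ends)"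

lemma token_one: "token 1"
  using two_le_d power_of_two_pow[of 0] unfolding token_def by simp

lemma mod_at_run_boundary_in_states: "at_run_boundary j \<Longrightarrow> r mod 2 ^ j \<in> states"
proof (induction j)
  case 0
  show ?case by (simp add: states_def token_def)
next
  case (Suc j)
  show ?case
  proof (cases "bit r j")
    case False
    then have "r mod 2 ^ Suc j = r mod 2 ^ j" and "at_run_boundary j"
      using take_bit_Suc_from_most[of j r] by (simp_all add: take_bit_eq_mod at_run_boundary_def)
    with Suc.IH show ?thesis by simp
  next
    case True
    with Suc.prems have "Suc j \<in> run_ends" by (simp add: at_run_boundary_def run_ends_def)
    then show ?thesis unfolding states_def by (intro insertI2 UnI2 imageI)
  qed
qed

lemma token_subset: "Collect token \<subseteq> insert 0 ((\<lambda>k. 2 ^ k) ` {..p})"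
proof
  fix x assume "x \<in> Collect token"
  show "x \<in> insert 0 ((\<lambda>k. 2 ^ k) ` {..p})"
  proof (cases "x = 0")
    case False
    with \<open>x \<in> Collect token\<close> obtain k where "x = 2 ^ k" "x < d"
      unfolding token_def power_of_two_def by blast
    with d_less_pow have "(2::nat) ^ k < 2 ^ Suc p" by linarith
    then have "k < Suc p" by (rule power_less_imp_less_exp[rotated]) simp
    with \<open>x = 2 ^ k\<close> show ?thesis by simp
  qed simp
qed

lemma finite_states: "finite states"
proof -
  have "finite (Collect token)" using token_subset by (rule finite_subset) simp
  then show ?thesis unfolding states_def using finite_run_ends by simp
qed

subsection \<open>Interactions\<close>

text \<open>An agent holding the prefix \<open>r mod 2 ^ b\<close> of \<open>r\<close>, where \<open>b = run_start a\<close>, absorbs the token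
  \<open>2 ^ a\<close> and hands back \<open>2 ^ b\<close>: this adds the run of ones \<open>[b, a)\<close> to its prefix. The case
  \<open>r mod 2 ^ a = 2 ^ b\<close> is left out because it would clash with merging two equal tokens.\<close>
definition exchanges :: "((nat \<times> nat) \<times> (nat \<times> nat)) set" where
  "exchanges = {((r mod 2 ^ run_start a, 2 ^ a), (r mod 2 ^ a, 2 ^ run_start a)) | a.
     a \<in> run_ends \<and> r mod 2 ^ a \<noteq> 2 ^ run_start a}"

definition matching :: "((nat \<times> nat) \<times> (nat \<times> nat)) set" where
  "matching = exchanges \<union> exchanges\<inverse>"

lemma exchangesE:
  assumes "(x, y) \<in> exchanges"
  obtains a where "a \<in> run_ends" "r mod 2 ^ a \<noteq> 2 ^ run_start a"
    "x = (r mod 2 ^ run_start a, 2 ^ a)" "y = (r mod 2 ^ a, 2 ^ run_start a)"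
  using assms unfolding exchanges_def by blast

lemma matching_sym: "(x, y) \<in> matching \<Longrightarrow> (y, x) \<in> matching"
  unfolding matching_def by blast

lemma matching_cases:
  assumes "(x, y) \<in> matching"
  obtains "(x, y) \<in> exchanges" | "(y, x) \<in> exchanges"
  using assms unfolding matching_def by blast

lemma pos_mod_run_end: "a \<in> run_ends \<Longrightarrow> 0 < r mod 2 ^ a"
proof -
  assume a: "a \<in> run_ends"
  have "r mod 2 ^ run_start a < 2 ^ run_start a" by simp
  moreover have "(2::nat) ^ run_start a < 2 ^ a" using run_start_less[OF a] by simp
  ultimately show ?thesis using mod_run_end[OF a] by linarith
qed

lemma exchanges_right_unique: "(x, y) \<in> exchanges \<Longrightarrow> (x, z) \<in> exchanges \<Longrightarrow> y = z"
  by (elim exchangesE) simp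

lemma exchanges_left_unique: "(y, x) \<in> exchanges \<Longrightarrow> (z, x) \<in> exchanges \<Longrightarrow> y = z"
proof (elim exchangesE)
  fix a b assume "a \<in> run_ends" "b \<in> run_ends" and
    "x = (r mod 2 ^ a, 2 ^ run_start a)" "x = (r mod 2 ^ b, 2 ^ run_start b)"
  then have "a = b" using inj_on_run_start by (simp add: inj_on_eq_iff)
  moreover assume "y = (r mod 2 ^ run_start a, 2 ^ a)" "z = (r mod 2 ^ run_start b, 2 ^ b)"
  ultimately show "y = z" by simp
qed

text \<open>A pair never both absorbs and releases: that would need \<open>a = run_start b\<close> for two run ends,
  but bit \<open>run_start b\<close> of \<open>r\<close> is set while bit \<open>a\<close> is not.\<close>
lemma exchanges_absorb_not_release: "(x, y) \<in> exchanges \<Longrightarrow> (z, x) \<notin> exchanges"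
proof
  assume "(x, y) \<in> exchanges" "(z, x) \<in> exchanges"
  then obtain a b where "a \<in> run_ends" "b \<in> run_ends" "x = (r mod 2 ^ run_start a, 2 ^ a)"
    "x = (r mod 2 ^ b, 2 ^ run_start b)"
    by (elim exchangesE) blast
  then have "a = run_start b" "\<not> bit r a" by (simp_all add: run_ends_def)
  with \<open>b \<in> run_ends\<close> show False using run_start_less bit_run by simp
qed

lemma matching_unique: "(x, y) \<in> matching \<Longrightarrow> (x, z) \<in> matching \<Longrightarrow> y = z"
  unfolding matching_def
  using exchanges_right_unique exchanges_left_unique exchanges_absorb_not_release by blast

lemma exchange_sum: "(x, y) \<in> exchanges \<Longrightarrow> fst x + snd x = fst y + snd y"
  by (elim exchangesE) (simp add: mod_run_end)

lemma matching_sum: "(x, y) \<in> matching \<Longrightarrow> fst x + snd x = fst y + snd y"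
  by (elim matching_cases) (simp_all add: exchange_sum)

lemma matching_domain:
  assumes "(x, y) \<in> matching"
  shows "snd x \<noteq> 0" "fst x \<noteq> snd x" "x \<noteq> (0, 1)"
proof -
  have "snd x \<noteq> 0 \<and> fst x \<noteq> snd x \<and> x \<noteq> (0, 1)"
    using assms
  proof (cases rule: matching_cases)
    case 1
    then obtain a where a: "a \<in> run_ends" "x = (r mod 2 ^ run_start a, 2 ^ a)"
      by (rule exchangesE)
    have "r mod 2 ^ run_start a < 2 ^ run_start a" by simp
    also have "(2::nat) ^ run_start a < 2 ^ a" using run_start_less[OF a(1)] by simp
    finally have "r mod 2 ^ run_start a < 2 ^ a" .
    moreover have "(2::nat) ^ a \<noteq> 1" using run_end_le[OF a(1)] by simp
    ultimately show ?thesis using a(2) by auto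
  next
    case 2
    then obtain a where a: "a \<in> run_ends" "r mod 2 ^ a \<noteq> 2 ^ run_start a"
      "x = (r mod 2 ^ a, 2 ^ run_start a)"
      by (rule exchangesE)
    with pos_mod_run_end[OF a(1)] show ?thesis by auto
  qed
  then show "snd x \<noteq> 0" "fst x \<noteq> snd x" "x \<noteq> (0, 1)" by blast+
qed

lemma token_pow_run_end: "a \<in> run_ends \<Longrightarrow> token (2 ^ a)"
  using run_end_pow_less unfolding token_def by simp

lemma token_pow_run_start: "a \<in> run_ends \<Longrightarrow> token (2 ^ run_start a)"
proof -
  assume a: "a \<in> run_ends"
  then have "(2::nat) ^ run_start a < 2 ^ a" using run_start_less by simp
  then have "2 ^ run_start a < d" using run_end_pow_less[OF a] by linarith
  then show ?thesis unfolding token_def by simp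
qed

lemma exchange_in_states:
  assumes "(x, y) \<in> exchanges"
  shows "fst x \<in> states" "snd x \<in> states" "fst y \<in> states" "snd y \<in> states"
proof -
  from assms obtain a where a: "a \<in> run_ends"
    "x = (r mod 2 ^ run_start a, 2 ^ a)" "y = (r mod 2 ^ a, 2 ^ run_start a)"
    by (rule exchangesE)
  have "r mod 2 ^ run_start a \<in> states"
    using at_run_boundary_run_start[OF a(1)] by (rule mod_at_run_boundary_in_states)
  moreover have "r mod 2 ^ a \<in> states" using a(1) unfolding states_def by blast
  ultimately show "fst x \<in> states" "snd x \<in> states" "fst y \<in> states" "snd y \<in> states"
    using a token_pow_run_end token_pow_run_start unfolding states_def by auto
qed

lemma matching_in_states: "(x, y) \<in> matching \<Longrightarrow> fst x \<in> states \<and> snd x \<in> states"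
  by (elim matching_cases) (simp_all add: exchange_in_states)

text \<open>Tokens are split into and merged from equal halves; swapping \<open>0\<close> and \<open>1\<close> lets units move
  between agents.\<close>
fun pow2_step :: "nat \<times> nat \<Rightarrow> nat \<times> nat" where
  "pow2_step (x, y) =
    (if y = 0 \<and> power_of_two x \<and> 2 \<le> x then (x div 2, x div 2)
     else if x = y \<and> power_of_two x \<and> 2 * x < d then (2 * x, 0)
     else if (x, y) = (1, 0) then (0, 1)
     else if (x, y) = (0, 1) then (1, 0)
     else (x, y))"

declare pow2_step.simps [simp del]

lemma pow2_step_cases:
  fixes x y :: nat
  obtains (split) "y = 0" "power_of_two x" "2 \<le> x" "pow2_step (x, y) = (x div 2, x div 2)"
  | (merge) "x = y" "power_of_two x" "2 * x < d" "pow2_step (x, y) = (2 * x, 0)"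
  | (swap10) "x = 1" "y = 0" "pow2_step (x, y) = (0, 1)"
  | (swap01) "x = 0" "y = 1" "pow2_step (x, y) = (1, 0)"
  | (idle) "pow2_step (x, y) = (x, y)"
proof -
  consider (s) "y = 0" "power_of_two x" "2 \<le> x"
    | (m) "x = y" "power_of_two x" "2 * x < d"
    | (a) "x = 1" "y = 0"
    | (b) "x = 0" "y = 1"
    | (i) "\<not> (y = 0 \<and> power_of_two x \<and> 2 \<le> x)" "\<not> (x = y \<and> power_of_two x \<and> 2 * x < d)"
      "(x, y) \<noteq> (1, 0)" "(x, y) \<noteq> (0, 1)"
    by blast
  then show thesis
  proof cases
    case s
    then have "pow2_step (x, y) = (x div 2, x div 2)" by (simp add: pow2_step.simps)
    with s show thesis by (intro split) simp_all
  next
    case m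
    then have "x \<noteq> 0" using power_of_two_pos by blast
    with m have "pow2_step (x, y) = (2 * x, 0)" by (simp add: pow2_step.simps)
    with m show thesis by (intro merge) simp_all
  next
    case a
    then have "pow2_step (x, y) = (0, 1)" by (simp add: pow2_step.simps)
    with a show thesis by (rule swap10)
  next
    case b
    then have "pow2_step (x, y) = (1, 0)" by (simp add: pow2_step.simps)
    with b show thesis by (rule swap01)
  next
    case i
    then have "pow2_step (x, y) = (x, y)"
      unfolding pow2_step.simps by (simp only: if_False)
    then show thesis by (rule idle)
  qed
qed

lemma sum_pow2_step: "fst (pow2_step (x, y)) + snd (pow2_step (x, y)) = x + y"
proof (cases rule: pow2_step_cases[where x = x and y = y])
  case split
  then show ?thesis using power_of_two_half(2)[of x] by simp
qed simp_all

lemma pow2_step_involutive: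
  assumes "x + y < d"
  shows "pow2_step (pow2_step (x, y)) = (x, y)"
proof (cases rule: pow2_step_cases[where x = x and y = y])
  case split
  then have "power_of_two (x div 2)" "2 * (x div 2) = x" by (simp_all add: power_of_two_half)
  moreover have "x div 2 \<noteq> 0" using power_of_two_pos[OF \<open>power_of_two (x div 2)\<close>] by simp
  ultimately show ?thesis using split assms by (simp add: pow2_step.simps)
next
  case merge
  then show ?thesis using power_of_two_pos[of x] power_of_two_double[of x]
    by (simp add: pow2_step.simps)
qed (simp_all add: pow2_step.simps)

lemma pow2_step_in_states:
  assumes "x \<in> states" "y \<in> states" "x + y < d"
  shows "fst (pow2_step (x, y)) \<in> states \<and> snd (pow2_step (x, y)) \<in> states"
proof (cases rule: pow2_step_cases[where x = x and y = y])
  case split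
  then have "token (x div 2)" using assms(3) power_of_two_half[of x]
    unfolding token_def by simp
  with split show ?thesis unfolding states_def by simp
next
  case merge
  then have "token (2 * x)" using power_of_two_double unfolding token_def by simp
  with merge show ?thesis unfolding states_def by (simp add: token_def)
qed (use assms token_one in \<open>simp_all add: states_def token_def\<close>)

lemma pow2_step_not_in_matching:
  "(x, y) \<notin> Domain matching \<Longrightarrow> pow2_step (x, y) \<notin> Domain matching"
  using matching_domain by (cases rule: pow2_step_cases[where x = x and y = y]) fastforce+

definition interact :: "nat \<times> nat \<Rightarrow> nat \<times> nat" where
  "interact xy = (if xy \<in> Domain matching then (THE z. (xy, z) \<in> matching) else pow2_step xy)"

lemma interact_matching: "(xy, z) \<in> matching \<Longrightarrow> interact xy = z"
proof -
  assume xyz: "(xy, z) \<in> matching"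
  then have "(THE z. (xy, z) \<in> matching) = z"
    using matching_unique by (intro the_equality) blast+
  moreover have "xy \<in> Domain matching" using xyz by (rule DomainI)
  ultimately show ?thesis unfolding interact_def by simp
qed

lemma interact_pow2_step: "xy \<notin> Domain matching \<Longrightarrow> interact xy = pow2_step xy"
  unfolding interact_def by simp

lemma sum_interact: "fst (interact (x, y)) + snd (interact (x, y)) = x + y"
proof (cases "(x, y) \<in> Domain matching")
  case True
  then obtain z where "((x, y), z) \<in> matching" by blast
  then show ?thesis using interact_matching matching_sum by fastforce
qed (simp add: interact_pow2_step sum_pow2_step)

lemma interact_involutive:
  assumes "x + y < d"
  shows "interact (interact (x, y)) = (x, y)"
proof (cases "(x, y) \<in> Domain matching")
  case True
  then obtain z where "((x, y), z) \<in> matching" by blast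
  then show ?thesis using interact_matching matching_sym by metis
next
  case False
  obtain u v where uv: "pow2_step (x, y) = (u, v)" by fastforce
  with False have "(u, v) \<notin> Domain matching" using pow2_step_not_in_matching by metis
  with False uv show ?thesis
    using pow2_step_involutive[OF assms] by (simp add: interact_pow2_step)
qed

lemma interact_in_states:
  assumes "x \<in> states" "y \<in> states" "x + y < d"
  shows "fst (interact (x, y)) \<in> states \<and> snd (interact (x, y)) \<in> states"
proof (cases "(x, y) \<in> Domain matching")
  case True
  then obtain z where "((x, y), z) \<in> matching" by blast
  then show ?thesis
    using interact_matching matching_sym matching_in_states by metis
qed (use assms pow2_step_in_states in \<open>simp add: interact_pow2_step\<close>)

lemma interact_split: "power_of_two x \<Longrightarrow> 2 \<le> x \<Longrightarrow> interact (x, 0) = (x div 2, x div 2)"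
proof -
  assume "power_of_two x" "2 \<le> x"
  moreover have "(x, 0) \<notin> Domain matching" using matching_domain(1) by fastforce
  ultimately show ?thesis by (simp add: interact_pow2_step pow2_step.simps)
qed

lemma interact_swap: "interact (0, 1) = (1, 0)"
proof -
  have "(0, 1) \<notin> Domain matching" using matching_domain(3) by blast
  then show ?thesis by (simp add: interact_pow2_step pow2_step.simps)
qed

definition delta :: "nat \<Rightarrow> nat \<Rightarrow> (nat \<times> nat) set" where
  "delta x y = (if d \<le> x + y then {(d, d)} else {interact (x, y)})"

lemma d_in_states: "d \<in> states"
  unfolding states_def by simp

lemma one_in_states: "1 \<in> states"
  using token_one unfolding states_def by simp

lemma population_protocol_delta: "population_protocol states (states - {d}) {d} 1 delta"
  unfolding population_protocol_def
proof (intro conjI ballI)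
  fix x y assume "x \<in> states" "y \<in> states"
  then show "delta x y \<subseteq> states \<times> states"
    using interact_in_states[of x y] d_in_states unfolding delta_def
    by (cases "interact (x, y)") auto
  show "delta x y \<noteq> {}" unfolding delta_def by simp
qed (use finite_states d_in_states one_in_states in auto)

lemma deterministic_delta: "deterministic states delta"
  unfolding deterministic_def delta_def by simp

subsection \<open>Reachability\<close>

lemma silent_transition:
  assumes "i \<in> {1..n}" "j \<in> {1..n}" "i \<noteq> j" "C i + C j < d" "interact (C i, C j) = (a, b)"
  shows "transition delta n C (C(i := a, j := b))"
  using assms by (intro transitionI) (simp_all add: delta_def)

lemma accepting_persists:
  assumes "transition delta n C D" "C k = d"
  shows "D k = d"
proof -
  from assms(1) obtain i j where ij: "i \<in> {1..n}" "j \<in> {1..n}" "i \<noteq> j"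
    "(D i, D j) \<in> delta (C i) (C j)" "\<And>k. k \<noteq> i \<Longrightarrow> k \<noteq> j \<Longrightarrow> D k = C k"
    by (elim transitionE) blast
  show ?thesis
  proof (cases "k = i \<or> k = j")
    case True
    with assms(2) have "d \<le> C i + C j" by auto
    with ij(4) have "D i = d" "D j = d" by (simp_all add: delta_def)
    with True show ?thesis by auto
  qed (use ij(5) assms(2) in simp)
qed

text \<open>Below the threshold every interaction can be undone, because \<open>interact\<close> is an involution
  that preserves the sum of the two values.\<close>
lemma transition_reverse:
  assumes "transition delta n C D" "\<forall>k\<in>{1..n}. D k \<noteq> d"
  shows "transition delta n D C"
proof -
  from assms(1) obtain i j where ij: "i \<in> {1..n}" "j \<in> {1..n}" "i \<noteq> j"
    "(D i, D j) \<in> delta (C i) (C j)" "\<And>k. k \<noteq> i \<Longrightarrow> k \<noteq> j \<Longrightarrow> D k = C k"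
    by (elim transitionE) blast
  have below: "C i + C j < d"
  proof (rule ccontr)
    assume "\<not> C i + C j < d"
    with ij(4) have "D i = d" by (simp add: delta_def)
    with assms(2) ij(1) show False by blast
  qed
  with ij(4) have step: "interact (C i, C j) = (D i, D j)" by (simp add: delta_def)
  then have "D i + D j < d" using sum_interact[of "C i" "C j"] below by simp
  moreover have "interact (D i, D j) = (C i, C j)"
    using step interact_involutive[OF below] by simp
  ultimately have "transition delta n D (D(i := C i, j := C j))"
    by (rule silent_transition[OF ij(1-3)])
  moreover have "D(i := C i, j := C j) = C"
    using ij(5) by (auto simp: fun_eq_iff)
  ultimately show ?thesis by simp
qed

lemma reachable_reverse:
  "reachable delta n C D \<Longrightarrow> \<forall>k\<in>{1..n}. D k \<noteq> d \<Longrightarrow> reachable delta n D C"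
  unfolding reachable_def
proof (induction rule: rtranclp_induct)
  case (step B D)
  then have "\<forall>k\<in>{1..n}. B k \<noteq> d" using accepting_persists by blast
  with step.IH have "(transition delta n)\<^sup>*\<^sup>* B C" by blast
  moreover have "transition delta n D B" using transition_reverse step.hyps(2) step.prems by blast
  ultimately show ?case by (meson converse_rtranclp_into_rtranclp)
qed simp

lemma sum_reachable_below_threshold:
  assumes "n < d" "reachable delta n (init_config 1) C"
  shows "sum C {1..n} = n"
  using assms(2) unfolding reachable_def
proof (induction rule: rtranclp_induct)
  case base
  show ?case by (simp add: init_config_def)
next
  case (step B C)
  from step.hyps(2) obtain i j where ij: "i \<in> {1..n}" "j \<in> {1..n}" "i \<noteq> j"
    "(C i, C j) \<in> delta (B i) (B j)" "\<And>k. k \<noteq> i \<Longrightarrow> k \<noteq> j \<Longrightarrow> C k = B k"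
    by (elim transitionE) blast
  have "B i + B j \<le> sum B {1..n}" using ij(1-3) by (simp add: sum_split_pair)
  with step.IH assms(1) have "B i + B j < d" by simp
  with ij(4) have "interact (B i, B j) = (C i, C j)" by (simp add: delta_def)
  then have "C i + C j = B i + B j" using sum_interact[of "B i" "B j"] by simp
  with ij have "sum C {1..n} = sum B {1..n}" by (intro sum_change_pair) simp_all
  with step.IH show ?case by simp
qed

definition accepting_config :: "nat \<Rightarrow> config" where
  "accepting_config n = (\<lambda>i. if i \<in> {1..n} then d else 1)"

lemma accepting_config_absorbing: "transition delta n (accepting_config n) D \<Longrightarrow> D = accepting_config n"
proof -
  assume "transition delta n (accepting_config n) D"
  then obtain i j where ij: "i \<in> {1..n}" "j \<in> {1..n}"
    "(D i, D j) \<in> delta (accepting_config n i) (accepting_config n j)"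
    "\<And>k. k \<noteq> i \<Longrightarrow> k \<noteq> j \<Longrightarrow> D k = accepting_config n k"
    by (elim transitionE) blast
  then have "D i = d" "D j = d" by (simp_all add: accepting_config_def delta_def)
  show ?thesis
  proof
    fix k
    show "D k = accepting_config n k"
      using ij(1,2,4) \<open>D i = d\<close> \<open>D j = d\<close> by (cases "k = i \<or> k = j") (auto simp: accepting_config_def)
  qed
qed

lemma accepting_spreads:
  assumes "k \<in> {1..n}" "C k = d" "\<forall>i. i \<notin> {1..n} \<longrightarrow> C i = 1"
  shows "reachable delta n C (accepting_config n)"
  using assms(2,3)
proof (induction "card {i\<in>{1..n}. C i \<noteq> d}" arbitrary: C rule: less_induct)
  case less
  show ?case
  proof (cases "\<exists>i\<in>{1..n}. C i \<noteq> d")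
    case False
    with less.prems(2) have "C = accepting_config n" by (auto simp: fun_eq_iff accepting_config_def)
    then show ?thesis by (simp add: reachable_refl)
  next
    case True
    then obtain i where i: "i \<in> {1..n}" "C i \<noteq> d" by blast
    with less.prems(1) have "i \<noteq> k" by auto
    let ?C' = "C(k := d, i := d)"
    have "transition delta n C ?C'"
      using assms(1) i(1) \<open>i \<noteq> k\<close> less.prems(1) by (intro transitionI) (simp_all add: delta_def)
    moreover have "reachable delta n ?C' (accepting_config n)"
    proof (rule less.hyps)
      have "{j\<in>{1..n}. ?C' j \<noteq> d} \<subset> {j\<in>{1..n}. C j \<noteq> d}" using i by auto
      then show "card {j\<in>{1..n}. ?C' j \<noteq> d} < card {j\<in>{1..n}. C j \<noteq> d}"
        by (rule psubset_card_mono[rotated]) simp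
      show "?C' k = d" by simp
      show "\<forall>j. j \<notin> {1..n} \<longrightarrow> ?C' j = 1" using less.prems(2) assms(1) i(1) by auto
    qed
    ultimately show ?thesis by (rule reachable_step_converse)
  qed
qed

definition token_segment :: "nat \<Rightarrow> nat \<Rightarrow> config \<Rightarrow> nat \<Rightarrow> bool" where
  "token_segment n s C c \<longleftrightarrow> (\<forall>i\<in>{s..n}. token (C i)) \<and> sum C {s..n} = c \<and> c \<le> card {s..n}"

lemma token_segment_split_step:
  assumes "1 \<le> s" "token_segment n s C c" "i \<in> {s..n}" "2 \<le> C i"
  obtains j where "j \<in> {s..n}" "C j = 0"
    "transition delta n C (C(i := C i div 2, j := C i div 2))"
    "token_segment n s (C(i := C i div 2, j := C i div 2)) c"
proof -
  have "token (C i)" using assms(2,3) unfolding token_segment_def by blast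
  with assms(4) have pow: "power_of_two (C i)" "C i < d" unfolding token_def by auto
  then have half: "power_of_two (C i div 2)" "2 * (C i div 2) = C i" "0 < C i div 2"
    using power_of_two_half[OF pow(1) assms(4)] power_of_two_pos by auto
  have "\<exists>j\<in>{s..n}. C j = 0"
  proof (rule ccontr)
    assume "\<not> (\<exists>j\<in>{s..n}. C j = 0)"
    then have "\<forall>k\<in>{s..n}. C k \<noteq> 0" by auto
    then have "card {s..n} < sum C {s..n}"
      using card_less_sum[of "{s..n}" C i] assms(3,4) by simp
    with assms(2) show False unfolding token_segment_def by simp
  qed
  then obtain j where j: "j \<in> {s..n}" "C j = 0" by blast
  with assms(4) have "i \<noteq> j" by auto
  have "interact (C i, C j) = (C i div 2, C i div 2)"
    using j(2) pow(1) assms(4) by (simp add: interact_split)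
  moreover have "{s..n} \<subseteq> {1..n}" using assms(1) by auto
  ultimately have "transition delta n C (C(i := C i div 2, j := C i div 2))"
    using assms(3) j \<open>i \<noteq> j\<close> pow(2) by (intro silent_transition) auto
  moreover have "token_segment n s (C(i := C i div 2, j := C i div 2)) c"
  proof -
    have "token (C i div 2)" using half pow(2) unfolding token_def by simp
    then have "\<forall>k\<in>{s..n}. token ((C(i := C i div 2, j := C i div 2)) k)"
      using assms(2) unfolding token_segment_def by simp
    moreover have "sum (C(i := C i div 2, j := C i div 2)) {s..n} = sum C {s..n}"
      using assms(3) j \<open>i \<noteq> j\<close> half(2) by (intro sum_change_pair) auto
    ultimately show ?thesis using assms(2) unfolding token_segment_def by simp
  qed
  ultimately show thesis using j that by blast
qed

lemma token_segment_reaches_binary: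
  assumes "1 \<le> s" "token_segment n s C c"
  shows "\<exists>D. reachable delta n C D \<and> (\<forall>i. i \<notin> {s..n} \<longrightarrow> D i = C i) \<and>
    (\<forall>i\<in>{s..n}. D i \<le> 1) \<and> sum D {s..n} = c"
  using assms(2)
proof (induction "card {i\<in>{s..n}. C i = 0}" arbitrary: C rule: less_induct)
  case less
  show ?case
  proof (cases "\<forall>i\<in>{s..n}. C i \<le> 1")
    case True
    with less.prems show ?thesis unfolding token_segment_def by (blast intro: reachable_refl)
  next
    case False
    then obtain i where i: "i \<in> {s..n}" "2 \<le> C i" by (auto simp: not_le)
    let ?h = "C i div 2"
    obtain j where j: "j \<in> {s..n}" "C j = 0" and
      step: "transition delta n C (C(i := ?h, j := ?h))" and
      seg: "token_segment n s (C(i := ?h, j := ?h)) c"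
      using token_segment_split_step[OF assms(1) less.prems i] by blast
    have "0 < ?h" using i(2) by simp
    then have "{k\<in>{s..n}. (C(i := ?h, j := ?h)) k = 0} \<subset> {k\<in>{s..n}. C k = 0}"
      using j by auto
    then have "card {k\<in>{s..n}. (C(i := ?h, j := ?h)) k = 0} < card {k\<in>{s..n}. C k = 0}"
      by (rule psubset_card_mono[rotated]) simp
    from less.hyps[OF this seg] obtain D where
      "reachable delta n (C(i := ?h, j := ?h)) D" "\<forall>k. k \<notin> {s..n} \<longrightarrow> D k = (C(i := ?h, j := ?h)) k"
      "\<forall>k\<in>{s..n}. D k \<le> 1" "sum D {s..n} = c"
      by blast
    with step i(1) j(1) show ?thesis by (auto intro: reachable_step_converse)
  qed
qed

lemma binary_segment_front_one:
  assumes "1 \<le> s" "\<forall>i\<in>{s..n}. C i \<le> 1" "0 < sum C {s..n}"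
  obtains C' where "reachable delta n C C'" "s \<le> n" "C' s = 1"
    "\<forall>k. k \<notin> {s..n} \<longrightarrow> C' k = C k" "\<forall>k\<in>{s..n}. C' k \<le> 1" "sum C' {s..n} = sum C {s..n}"
proof -
  have "\<exists>i\<in>{s..n}. C i \<noteq> 0"
  proof (rule ccontr)
    assume "\<not> (\<exists>i\<in>{s..n}. C i \<noteq> 0)"
    then have "sum C {s..n} = 0" by simp
    with assms(3) show False by simp
  qed
  then obtain i where i: "i \<in> {s..n}" "C i = 1" using assms(2) by fastforce
  then have "s \<le> n" by simp
  with assms(2) have "C s \<le> 1" by simp
  show thesis
  proof (cases "C s = 1")
    case True
    with \<open>s \<le> n\<close> assms(2) show thesis by (intro that[of C]) (simp_all add: reachable_refl)
  next
    case False
    with \<open>C s \<le> 1\<close> i have "C s = 0" "s \<noteq> i" by auto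
    then have "transition delta n C (C(s := 1, i := 0))"
      using i assms(1) \<open>s \<le> n\<close> two_le_d interact_swap by (intro silent_transition) auto
    moreover have "sum (C(s := 1, i := 0)) {s..n} = sum C {s..n}"
      using i \<open>s \<le> n\<close> \<open>C s = 0\<close> \<open>s \<noteq> i\<close>
      by (intro sum_change_pair[where S = "{s..n}" and i = s and j = i]) auto
    ultimately show thesis
      using \<open>s \<le> n\<close> \<open>s \<noteq> i\<close> i assms(2)
      by (intro that[of "C(s := 1, i := 0)"]) (auto simp: reachable_def)
  qed
qed

lemma binary_segment_reaches_sorted:
  assumes "1 \<le> s" "\<forall>i\<in>{s..n}. C i \<le> 1" "sum C {s..n} = c"
  shows "reachable delta n C (ones_then_zeros s n c C)"
  using assms
proof (induction c arbitrary: s C)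
  case 0
  then have "\<forall>i\<in>{s..n}. C i = 0" by simp
  then have "ones_then_zeros s n 0 C = C" by (auto simp: ones_then_zeros_def fun_eq_iff)
  then show ?case by (simp add: reachable_refl)
next
  case (Suc c)
  then have "0 < sum C {s..n}" by simp
  then obtain C' where C': "reachable delta n C C'" "s \<le> n" "C' s = 1"
    "\<forall>k. k \<notin> {s..n} \<longrightarrow> C' k = C k" "\<forall>k\<in>{s..n}. C' k \<le> 1" "sum C' {s..n} = sum C {s..n}"
    by (rule binary_segment_front_one[OF Suc.prems(1,2)])
  then have "sum C' {Suc s..n} = c"
    using sum.atLeast_Suc_atMost[OF \<open>s \<le> n\<close>, of C'] Suc.prems(3) by simp
  with C' Suc.prems(1) have "reachable delta n C' (ones_then_zeros (Suc s) n c C')"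
    by (intro Suc.IH) auto
  moreover have "ones_then_zeros (Suc s) n c C' = ones_then_zeros s n (Suc c) C"
  proof
    fix k
    show "ones_then_zeros (Suc s) n c C' k = ones_then_zeros s n (Suc c) C k"
      using C'(2-4) by (cases "k = s") (auto simp: ones_then_zeros_def)
  qed
  ultimately show ?case using C'(1) by (metis reachable_trans)
qed

text \<open>Both configurations are driven to the same sorted 0/1 normal form; the path from \<open>D\<close> is then
  reversed, which needs the normal form, and hence the agents before \<open>s\<close>, to be non-accepting.\<close>
lemma token_segments_connected:
  assumes "1 \<le> s" "token_segment n s C c" "token_segment n s D c"
    and "\<forall>i. i \<notin> {s..n} \<longrightarrow> C i = D i" "\<forall>i\<in>{1..<s}. D i \<noteq> d"
  shows "reachable delta n C D"
proof -
  obtain C1 where C1: "reachable delta n C C1" "\<forall>i. i \<notin> {s..n} \<longrightarrow> C1 i = C i"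
    "\<forall>i\<in>{s..n}. C1 i \<le> 1" "sum C1 {s..n} = c"
    using token_segment_reaches_binary[OF assms(1,2)] by blast
  obtain D1 where D1: "reachable delta n D D1" "\<forall>i. i \<notin> {s..n} \<longrightarrow> D1 i = D i"
    "\<forall>i\<in>{s..n}. D1 i \<le> 1" "sum D1 {s..n} = c"
    using token_segment_reaches_binary[OF assms(1,3)] by blast
  have same: "ones_then_zeros s n c C1 = ones_then_zeros s n c D1"
    using C1(2) D1(2) assms(4) by (auto simp: ones_then_zeros_def fun_eq_iff)
  have "reachable delta n C (ones_then_zeros s n c C1)"
    using C1(1) binary_segment_reaches_sorted[OF assms(1) C1(3,4)] by (rule reachable_trans)
  moreover have "reachable delta n (ones_then_zeros s n c D1) D"
  proof (rule reachable_reverse)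
    show "reachable delta n D (ones_then_zeros s n c D1)"
      using D1(1) binary_segment_reaches_sorted[OF assms(1) D1(3,4)] by (rule reachable_trans)
    show "\<forall>k\<in>{1..n}. ones_then_zeros s n c D1 k \<noteq> d"
    proof
      fix k assume k: "k \<in> {1..n}"
      show "ones_then_zeros s n c D1 k \<noteq> d"
      proof (cases "k \<in> {s..n}")
        case True
        then show ?thesis using two_le_d by (simp add: ones_then_zeros_def)
      next
        case False
        with k have "k \<in> {1..<s}" by auto
        with False D1(2) assms(5) show ?thesis by (simp add: ones_then_zeros_def)
      qed
    qed
  qed
  ultimately show ?thesis using same by (metis reachable_trans)
qed

lemma token_le_one: "x \<le> 1 \<Longrightarrow> token x"
  using token_one by (cases x) (simp_all add: token_def)

lemma init_token_segment: "token_segment n 1 (init_config 1) n"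
  unfolding token_segment_def init_config_def using token_one by simp

definition two_agent_config :: "nat \<Rightarrow> nat \<Rightarrow> nat \<Rightarrow> config" where
  "two_agent_config n w u = ones_then_zeros 3 n (n - w - u) ((init_config 1)(1 := w, 2 := u))"

lemma two_agent_config_1 [simp]: "two_agent_config n w u (Suc 0) = w"
  and two_agent_config_2 [simp]: "two_agent_config n w u 2 = u"
  by (simp_all add: two_agent_config_def ones_then_zeros_def)

lemma two_agent_config_outside: "2 \<le> n \<Longrightarrow> i \<notin> {1..n} \<Longrightarrow> two_agent_config n w u i = 1"
proof -
  assume "2 \<le> n" "i \<notin> {1..n}"
  then have "i \<noteq> 1" "i \<noteq> 2" "i \<notin> {3..n}" by auto
  then show ?thesis by (simp add: two_agent_config_def ones_then_zeros_def init_config_def)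
qed

lemma two_agent_config_update:
  "w + u = w' + u' \<Longrightarrow> (two_agent_config n w u)(1 := w', 2 := u') = two_agent_config n w' u'"
  by (auto simp: two_agent_config_def ones_then_zeros_def fun_eq_iff)

lemma token_segment_two_agent_config:
  assumes "2 \<le> w + u" "w + u \<le> n" "token u"
  shows "1 \<le> w \<Longrightarrow> token_segment n 2 (two_agent_config n w u) (n - w)"
    and "token w \<Longrightarrow> token_segment n 1 (two_agent_config n w u) n"
proof -
  let ?T = "two_agent_config n w u"
  have "2 \<le> n" using assms by linarith
  have tail_tokens: "\<forall>i\<in>{3..n}. token (?T i)"
    by (auto simp: two_agent_config_def ones_then_zeros_def intro: token_le_one)
  have "sum ?T {3..n} = n - w - u"
    unfolding two_agent_config_def using assms(1,2) by (intro sum_ones_then_zeros) simp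
  then have sum2: "sum ?T {2..n} = n - w"
    using sum.atLeast_Suc_atMost[of 2 n ?T] \<open>2 \<le> n\<close> assms(2) by (simp add: numeral_3_eq_3)
  have seg2: "\<forall>i\<in>{2..n}. token (?T i)"
  proof
    fix i assume "i \<in> {2..n}"
    then consider "i = 2" | "i \<in> {3..n}" by fastforce
    then show "token (?T i)" using tail_tokens assms(3) by cases simp_all
  qed
  show "1 \<le> w \<Longrightarrow> token_segment n 2 ?T (n - w)"
    using seg2 sum2 unfolding token_segment_def by simp
  assume "token w"
  have "sum ?T {1..n} = ?T 1 + sum ?T {Suc 1..n}"
    using \<open>2 \<le> n\<close> by (intro sum.atLeast_Suc_atMost) simp
  also have "\<dots> = n"
    using sum2 assms(2) by (simp add: numeral_2_eq_2)
  finally have "sum ?T {1..n} = n" .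
  moreover have "\<forall>i\<in>{1..n}. token (?T i)"
  proof
    fix i assume "i \<in> {1..n}"
    then consider "i = 1" | "i \<in> {2..n}" by fastforce
    then show "token (?T i)" using seg2 \<open>token w\<close> by cases simp_all
  qed
  ultimately show "token_segment n 1 ?T n" unfolding token_segment_def by simp
qed

lemma reachable_from_init_outside:
  "reachable delta n (init_config 1) C \<Longrightarrow> i \<notin> {1..n} \<Longrightarrow> C i = 1"
  using reachable_from_init_in_states[OF population_protocol_delta] by blast

definition accumulable :: "nat \<Rightarrow> nat \<Rightarrow> bool" where
  "accumulable n w \<longleftrightarrow>
    (\<exists>C. reachable delta n (init_config 1) C \<and> C 1 = w \<and> token_segment n 2 C (n - w))"

lemma agrees_with_two_agent_config:
  assumes "reachable delta n (init_config 1) C" "C 1 = w" "2 \<le> n"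
  shows "\<forall>i. i \<notin> {2..n} \<longrightarrow> C i = two_agent_config n w u i"
proof (intro allI impI)
  fix i assume "i \<notin> {2..n}"
  then consider "i = 1" | "i \<notin> {1..n}" by fastforce
  then show "C i = two_agent_config n w u i"
  proof cases
    case 2
    then show ?thesis
      using assms(3) two_agent_config_outside reachable_from_init_outside[OF assms(1)] by simp
  qed (use assms(2) in simp)
qed

lemma reachable_two_agent_config:
  assumes "w < d" "token w \<or> accumulable n w" "token u" "2 \<le> w + u" "w + u \<le> n"
  shows "reachable delta n (init_config 1) (two_agent_config n w u)"
proof (cases "token w")
  case True
  show ?thesis
  proof (rule token_segments_connected)
    show "token_segment n 1 (init_config 1) n" by (rule init_token_segment)
    show "token_segment n 1 (two_agent_config n w u) n"
      by (rule token_segment_two_agent_config(2)[OF assms(4,5,3) True])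
    show "\<forall>i. i \<notin> {1..n} \<longrightarrow> init_config 1 i = two_agent_config n w u i"
      using assms(4,5) two_agent_config_outside by (simp add: init_config_def)
  qed simp_all
next
  case False
  with assms(2) obtain C where C: "reachable delta n (init_config 1) C" "C 1 = w"
    "token_segment n 2 C (n - w)"
    unfolding accumulable_def by blast
  from False have "1 \<le> w" by (cases w) (simp_all add: token_def)
  have "reachable delta n C (two_agent_config n w u)"
  proof (rule token_segments_connected)
    show "token_segment n 2 (two_agent_config n w u) (n - w)"
      by (rule token_segment_two_agent_config(1)[OF assms(4,5,3) \<open>1 \<le> w\<close>])
    show "\<forall>i. i \<notin> {2..n} \<longrightarrow> C i = two_agent_config n w u i"
      using C(1,2) assms(4,5) by (intro agrees_with_two_agent_config) simp_all
    show "\<forall>i\<in>{1..<2}. two_agent_config n w u i \<noteq> d"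
    proof
      fix i :: nat assume "i \<in> {1..<2}"
      then have "i = 1" by simp
      with assms(1) show "two_agent_config n w u i \<noteq> d" by simp
    qed
  qed (use C(3) in simp_all)
  with C(1) show ?thesis by (rule reachable_trans)
qed

lemma accumulable_if_reachable:
  assumes "reachable delta n (init_config 1) (two_agent_config n w u)"
    and "1 \<le> w" "token u" "2 \<le> w + u" "w + u \<le> n"
  shows "accumulable n w"
  unfolding accumulable_def
proof (intro exI conjI)
  show "two_agent_config n w u 1 = w" by simp
qed (use assms token_segment_two_agent_config(1)[OF assms(4,5,3,2)] in simp_all)

lemma exchange_below_threshold: "a \<in> run_ends \<Longrightarrow> r mod 2 ^ run_start a + 2 ^ a < d"
proof -
  assume a: "a \<in> run_ends"
  have "run_start a < p" using run_start_less[OF a] run_end_le[OF a] by linarith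
  then have "(2::nat) ^ run_start a < 2 ^ p" by simp
  moreover have "r mod 2 ^ a \<le> r" by simp
  ultimately show ?thesis using mod_run_end[OF a] d_eq by linarith
qed

lemma reachable_exchange:
  assumes "a \<in> run_ends" "r mod 2 ^ a \<noteq> 2 ^ run_start a" "2 \<le> n"
    and "reachable delta n (init_config 1) (two_agent_config n (r mod 2 ^ run_start a) (2 ^ a))"
  shows "reachable delta n (init_config 1) (two_agent_config n (r mod 2 ^ a) (2 ^ run_start a))"
proof -
  let ?C = "two_agent_config n (r mod 2 ^ run_start a) (2 ^ a)"
  have "((r mod 2 ^ run_start a, 2 ^ a), (r mod 2 ^ a, 2 ^ run_start a)) \<in> matching"
    using assms(1,2) unfolding matching_def exchanges_def by blast
  then have "transition delta n ?C (?C(1 := r mod 2 ^ a, 2 := 2 ^ run_start a))"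
    using exchange_below_threshold[OF assms(1)] assms(3)
    by (intro silent_transition) (simp_all add: interact_matching)
  with assms(4) have "reachable delta n (init_config 1) (?C(1 := r mod 2 ^ a, 2 := 2 ^ run_start a))"
    by (rule reachable_step)
  then show ?thesis
    using mod_run_end[OF assms(1)] two_agent_config_update[of "r mod 2 ^ run_start a" "2 ^ a"]
    by simp
qed

lemma accumulable_run_end:
  assumes a: "a \<in> run_ends" and "d \<le> n"
    and start: "r mod 2 ^ run_start a = 0 \<or> accumulable n (r mod 2 ^ run_start a)"
  shows "accumulable n (r mod 2 ^ a)"
proof -
  define w where "w = r mod 2 ^ a"
  define b where "b = run_start a"
  define wb where "wb = r mod 2 ^ b"
  have "0 < w" "w \<le> r" using pos_mod_run_end[OF a] unfolding w_def by simp_all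
  then have "w < d" using d_eq r_less by linarith
  have exchange: "w + 2 ^ b = wb + 2 ^ a"
    using mod_run_end[OF a] unfolding w_def wb_def b_def by simp
  have below: "wb + 2 ^ a < d"
    using exchange_below_threshold[OF a] unfolding wb_def b_def .
  have "0 < (2::nat) ^ b" by simp
  with \<open>0 < w\<close> have "2 \<le> w + 2 ^ b" by linarith
  show ?thesis
  proof (cases "w = 2 ^ b")
    case True
    with \<open>w < d\<close> have "token w" unfolding token_def by simp
    moreover have "2 \<le> w + 1" "w + 1 \<le> n" using \<open>0 < w\<close> \<open>w < d\<close> assms(2) by simp_all
    ultimately have "reachable delta n (init_config 1) (two_agent_config n w 1)"
      using \<open>w < d\<close> by (intro reachable_two_agent_config[OF _ _ token_one]) simp_all
    then show ?thesis
      using accumulable_if_reachable[OF _ _ token_one] \<open>0 < w\<close> \<open>2 \<le> w + 1\<close> \<open>w + 1 \<le> n\<close>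
      by (simp add: w_def)
  next
    case False
    from start have "token wb \<or> accumulable n wb"
      unfolding wb_def b_def by (auto simp: token_def)
    then have "reachable delta n (init_config 1) (two_agent_config n wb (2 ^ a))"
      using below exchange \<open>2 \<le> w + 2 ^ b\<close> assms(2) token_pow_run_end[OF a]
      by (intro reachable_two_agent_config) simp_all
    then have "reachable delta n (init_config 1) (two_agent_config n w (2 ^ b))"
      using reachable_exchange[OF a] False assms(2) two_le_d unfolding w_def wb_def b_def by simp
    moreover have "token (2 ^ b)" unfolding b_def using token_pow_run_start[OF a] .
    moreover have "w + 2 ^ b \<le> n" using exchange below assms(2) by linarith
    ultimately have "accumulable n w"
      using \<open>0 < w\<close> \<open>2 \<le> w + 2 ^ b\<close> accumulable_if_reachable by simp
    then show ?thesis unfolding w_def .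
  qed
qed

text \<open>Prefixes of \<open>r\<close> cut at run boundaries are built up run by run, from the least significant
  run upwards.\<close>
lemma accumulable_prefix:
  assumes "d \<le> n"
  shows "at_run_boundary j \<Longrightarrow> 0 < r mod 2 ^ j \<Longrightarrow> accumulable n (r mod 2 ^ j)"
proof (induction j rule: less_induct)
  case (less j)
  from less.prems(2) obtain k where j: "j = Suc k" by (cases j) simp_all
  show ?case
  proof (cases "bit r k")
    case False
    then have "r mod 2 ^ j = r mod 2 ^ k"
      using take_bit_Suc_from_most[of k r] j by (simp add: take_bit_eq_mod)
    moreover have "at_run_boundary k" using False by (simp add: at_run_boundary_def)
    ultimately show ?thesis using less.IH[of k] less.prems(2) j by simp
  next
    case True
    with less.prems(1) j have a: "j \<in> run_ends" by (simp add: at_run_boundary_def run_ends_def)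
    then have "r mod 2 ^ run_start j = 0 \<or> accumulable n (r mod 2 ^ run_start j)"
      using less.IH[OF run_start_less[OF a]] at_run_boundary_run_start[OF a] by auto
    then show ?thesis by (rule accumulable_run_end[OF a assms])
  qed
qed

subsection \<open>Correctness and number of states\<close>

lemma reachable_accepting_agent:
  assumes "d \<le> n"
  shows "\<exists>C. reachable delta n (init_config 1) C \<and> C 1 = d"
proof -
  obtain w u where wu: "w + u = d" "w < d" "token w \<or> accumulable n w" "token u"
  proof (cases "r = 0")
    case True
    then have "d = 2 ^ p" using d_eq by simp
    with two_le_d obtain q where "p = Suc q" by (cases p) simp_all
    with \<open>d = 2 ^ p\<close> have "2 ^ q + 2 ^ q = d" "(2::nat) ^ q < d" by simp_all
    then show thesis using that[of "2 ^ q" "2 ^ q"] unfolding token_def by simp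
  next
    case False
    have "at_run_boundary p" using not_bit_r[of p] by (simp add: at_run_boundary_def)
    moreover have "r mod 2 ^ p = r" using r_less by simp
    ultimately have "accumulable n r" using accumulable_prefix[OF assms, of p] False by simp
    moreover have "2 ^ p < d" using False d_eq by simp
    ultimately show thesis using that[of r "2 ^ p"] d_eq r_less unfolding token_def by simp
  qed
  with two_le_d assms have "reachable delta n (init_config 1) (two_agent_config n w u)"
    by (intro reachable_two_agent_config) simp_all
  moreover have "transition delta n (two_agent_config n w u) ((two_agent_config n w u)(1 := d, 2 := d))"
    using wu(1) two_le_d assms by (intro transitionI) (simp_all add: delta_def)
  ultimately show ?thesis using reachable_step by fastforce
qed

lemma reachable_accepting_config:
  assumes "d \<le> n" "reachable delta n (init_config 1) C"
  shows "reachable delta n C (accepting_config n)"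
proof (cases "\<exists>k\<in>{1..n}. C k = d")
  case True
  then show ?thesis
    using accepting_spreads reachable_from_init_outside[OF assms(2)] by blast
next
  case False
  then have "reachable delta n C (init_config 1)"
    using assms(2) reachable_reverse by blast
  moreover obtain X where X: "reachable delta n (init_config 1) X" "X 1 = d"
    using reachable_accepting_agent[OF assms(1)] by blast
  moreover have "1 \<in> {1..n}" using assms(1) two_le_d by simp
  then have "reachable delta n X (accepting_config n)"
    using accepting_spreads X reachable_from_init_outside[OF X(1)] by blast
  ultimately show ?thesis by (metis reachable_trans)
qed

lemma computes_threshold: "computes_1aware states (states - {d}) {d} 1 delta (\<lambda>n. d \<le> n)"
proof (rule computes_1awareI[OF population_protocol_delta])
  fix n C assume "\<not> d \<le> n" "reachable delta n (init_config 1) C"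
  then have "sum C {1..n} = n" by (intro sum_reachable_below_threshold) simp_all
  then have "C k < d" if "k \<in> {1..n}" for k
    using that member_le_sum[of k "{1..n}" C] \<open>\<not> d \<le> n\<close> by simp
  moreover have "C k \<in> states" if "k \<in> {1..n}" for k
    using that reachable_from_init_in_states[OF population_protocol_delta] \<open>reachable delta n _ C\<close>
    by blast
  ultimately show "C ` {1..n} \<subseteq> states - {d}" by fastforce
next
  fix n assume "d \<le> n"
  then show "\<exists>F. F ` {1..n} \<subseteq> {d} \<and>
      (\<forall>C. reachable delta n (init_config 1) C \<longrightarrow> reachable delta n C F) \<and>
      (\<forall>D. transition delta n F D \<longrightarrow> D = F)"
  proof (intro exI[of _ "accepting_config n"] conjI allI impI)
    show "accepting_config n ` {1..n} \<subseteq> {d}" by (auto simp: accepting_config_def)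
  next
    fix C assume "reachable delta n (init_config 1) C"
    with \<open>d \<le> n\<close> show "reachable delta n C (accepting_config n)"
      by (rule reachable_accepting_config)
  next
    fix D assume "transition delta n (accepting_config n) D"
    then show "D = accepting_config n" by (rule accepting_config_absorbing)
  qed
qed

lemma card_states: "card states \<le> p + 3 + card run_ends"
proof -
  have card_insert: "card (insert x A) \<le> Suc (card A)" if "finite A" for x :: nat and A
    using that by (simp add: card_insert_if)
  have "card (Collect token) \<le> card (insert 0 ((\<lambda>k. (2::nat) ^ k) ` {..p}))"
    using token_subset by (intro card_mono) simp_all
  also have "\<dots> \<le> Suc (card ((\<lambda>k. (2::nat) ^ k) ` {..p}))" by (intro card_insert) simp
  also have "card ((\<lambda>k. (2::nat) ^ k) ` {..p}) \<le> Suc p" using card_image_le[of "{..p}"] by simp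
  finally have "card (Collect token) \<le> p + 2" by simp
  moreover have "card ((\<lambda>a. r mod 2 ^ a) ` run_ends) \<le> card run_ends"
    using finite_run_ends by (rule card_image_le)
  moreover have "card states \<le> Suc (card (Collect token \<union> (\<lambda>a. r mod 2 ^ a) ` run_ends))"
    unfolding states_def using finite_states by (intro card_insert) (simp add: states_def)
  moreover note card_Un_le[of "Collect token" "(\<lambda>a. r mod 2 ^ a) ` run_ends"]
  ultimately show ?thesis by linarith
qed

lemma card_run_ends_le_count_ones: "card run_ends \<le> count_ones d"
proof -
  have "inj_on (\<lambda>a. a - 1) run_ends"
  proof (rule inj_onI)
    fix a b assume "a \<in> run_ends" "b \<in> run_ends" "a - 1 = b - 1"
    then show "a = b" using run_end_le[of a] run_end_le[of b] by linarith
  qed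
  moreover have "(\<lambda>a. a - 1) ` run_ends \<subseteq> {i. bit d i}"
  proof
    fix i assume "i \<in> (\<lambda>a. a - 1) ` run_ends"
    then obtain a where a: "a \<in> run_ends" "i = a - 1" by blast
    then have "bit r i" "i < p" using run_end_le[OF a(1)] unfolding run_ends_def by auto
    then show "i \<in> {i. bit d i}" using bit_r_iff by simp
  qed
  ultimately have "card run_ends \<le> card {i. bit d i}"
    using finite_bits card_inj_on_le by blast
  then show ?thesis by (simp add: count_ones_eq_card_bits)
qed

lemma card_run_ends_le_count_zeros: "card run_ends \<le> Suc (count_zeros (d - 1))"
proof -
  let ?Z = "{i. 2 ^ i \<le> d - 1 \<and> \<not> bit (d - 1) i}"
  have "run_ends - {p} \<subseteq> ?Z"
  proof
    fix a assume "a \<in> run_ends - {p}"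
    then have a: "a \<in> run_ends" "a \<noteq> p" by simp_all
    with run_end_le[OF a(1)] have "0 < a" "a < p" by simp_all
    from a(1) have "bit r (a - 1)" "\<not> bit r a" unfolding run_ends_def by simp_all
    with \<open>a < p\<close> have "bit d (a - 1)" "\<not> bit d a"
      using bit_r_iff[of "a - 1"] bit_r_iff[of a] by simp_all
    with \<open>0 < a\<close> have "\<not> bit (d - 1) a" using bit_diff_one[of d "a - 1" a] by simp
    moreover have "(2::nat) ^ a < 2 ^ p" using \<open>a < p\<close> by simp
    then have "2 ^ a \<le> d - 1" using pow_le_d by linarith
    ultimately show "a \<in> ?Z" by simp
  qed
  moreover have "finite ?Z" using finite_pow_le[of "d - 1"] by (rule finite_subset[rotated]) blast
  ultimately have "card (run_ends - {p}) \<le> card ?Z" by (rule card_mono[rotated])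
  also have "card ?Z = count_zeros (d - 1)" using two_le_d by (simp add: count_zeros_eq_card)
  finally show ?thesis using card_Diff_singleton_if[of run_ends p] by (simp split: if_splits)
qed

lemma card_states_bound:
  "real (card states) \<le> log 2 (real d) + real (min (count_ones d) (count_zeros (d - 1))) + 4"
proof -
  have "card run_ends \<le> Suc (min (count_ones d) (count_zeros (d - 1)))"
    using card_run_ends_le_count_ones card_run_ends_le_count_zeros by (simp add: min_def)
  with card_states have "card states \<le> p + 4 + min (count_ones d) (count_zeros (d - 1))"
    by linarith
  then have "real (card states) \<le> real p + 4 + real (min (count_ones d) (count_zeros (d - 1)))"
    by linarith
  moreover have "real p \<le> log 2 (real d)" using pow_le_d by (rule le_log2_of_power)
  ultimately show ?thesis by linarith
qed

end

lemma trivial_protocol: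
  shows "population_protocol {1} {} {1} 1 (\<lambda>_ _. {(1, 1)})"
    and "computes_1aware {1} {} {1} 1 (\<lambda>_ _. {(1, 1)}) (\<lambda>n. 1 \<le> n)"
proof -
  show protocol: "population_protocol {1} {} {1} 1 (\<lambda>_ _. {(1, 1)})"
    unfolding population_protocol_def by simp
  show "computes_1aware {1} {} {1} 1 (\<lambda>_ _. {(1, 1)}) (\<lambda>n. 1 \<le> n)"
  proof (rule computes_1awareI[OF protocol])
    fix n :: nat assume "1 \<le> n"
    let ?F = "init_config 1 :: config"
    have "C = ?F" if "reachable (\<lambda>_ _. {(1, 1)}) n ?F C" for C
      using reachable_from_init_in_states[OF protocol that]
      by (auto simp: fun_eq_iff init_config_def)
    moreover have "D = ?F" if "transition (\<lambda>_ _. {(1, 1)}) n ?F D" for D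
    proof
      from that obtain i j where ij: "(D i, D j) \<in> {(1, 1)}"
        "\<And>k. k \<noteq> i \<Longrightarrow> k \<noteq> j \<Longrightarrow> D k = ?F k"
        by (elim transitionE) blast
      show "D k = ?F k" for k
        using ij by (cases "k = i \<or> k = j") (auto simp: init_config_def)
    qed
    ultimately show "\<exists>F. F ` {1..n} \<subseteq> {1} \<and>
        (\<forall>C. reachable (\<lambda>_ _. {(1, 1)}) n ?F C \<longrightarrow> reachable (\<lambda>_ _. {(1, 1)}) n C F) \<and>
        (\<forall>D. transition (\<lambda>_ _. {(1, 1)}) n F D \<longrightarrow> D = F)"
      by (intro exI[of _ ?F]) (auto simp: init_config_def reachable_refl)
  qed simp
qed

theorem theorem1:
  shows "\<exists>c::real. \<forall>d::nat. d \<ge> 1 \<longrightarrow>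
     (\<exists>Q Q0 Q1 qinit \<delta>.
        population_protocol Q Q0 Q1 qinit \<delta> \<and> deterministic Q \<delta> \<and>
        computes_1aware Q Q0 Q1 qinit \<delta> (\<lambda>n. n \<ge> d) \<and>
        real (card Q) \<le> log 2 (real d) + real (min (count_ones d) (count_zeros (d - 1))) + c)"
proof (intro exI[of _ 4] allI impI)
  fix d :: nat assume "1 \<le> d"
  show "\<exists>Q Q0 Q1 qinit \<delta>.
      population_protocol Q Q0 Q1 qinit \<delta> \<and> deterministic Q \<delta> \<and>
      computes_1aware Q Q0 Q1 qinit \<delta> (\<lambda>n. n \<ge> d) \<and>
      real (card Q) \<le> log 2 (real d) + real (min (count_ones d) (count_zeros (d - 1))) + 4"
  proof (cases "d = 1")
    case True
    have "deterministic {1} (\<lambda>_ _. {(1, 1)})" by (simp add: deterministic_def)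
    with True trivial_protocol show ?thesis by fastforce
  next
    case False
    with \<open>1 \<le> d\<close> have "2 \<le> d" by simp
    then obtain p where "2 ^ p \<le> d" "d < 2 ^ Suc p"
      using ex_power_ivl1[of 2 d] by auto
    with \<open>2 \<le> d\<close> interpret threshold_construction d p by unfold_locales
    show ?thesis
      using population_protocol_delta deterministic_delta computes_threshold card_states_bound
      by blast
  qed
qed

end
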